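(* Consider the network model with interest-based mobility described in the context, where the angle $\alpha=\angle(S,D)$ is uniformly distributed on $[0,\pi/2]$, and the routing FM$^0$ in which $S$ can only deliver the message directly to $D$ (at the first meeting of $S$ and $D$). Let $T_{FM^0}$ be the delivery time, so that $\mathbb{E}[T_{FM^0}]=\int_0^{\pi/2}\frac{2}{\pi}\cdot\frac{1}{k\cos\alpha+\delta}\,d\alpha$. Then $\mathbb{E}[T_{FM^0}]=\Omega(\log(1/\delta))$, i.e. there is a constant $c>0$ with $\mathbb{E}[T_{FM^0}]\ge c\log(1/\delta(n))$ for all sufficiently large $n$.
   Context: Interest profiles of $S$ and $D$ are unit vectors in the closed positive orthant of the unit sphere of $\mathbb{R}^m$; $S=(1,0,\dots,0)$ and the angle $\angle(S,D)$ is uniform on $[0,\pi/2]$. Conditional on the profiles, the meeting instants of $S$ and $D$ form a Poisson process of rate $\lambda_{SD}=k\cos\angle(S,D)+\delta$ (interest-based mobility), where $\lambda>0$ is a fixed constant, $\delta=\delta(n)>0$ with $\delta(n)\to0$, and $k=\frac{\pi}{2}(\lambda-\delta)$. *)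

theory Defs
  imports "HOL-Analysis.Analysis"
begin

text \<open>Meeting rate of S and D as a function of the angle a between their interest
  profiles: lambda_SD = k cos a + delta, with k = (pi/2)(lambda - delta).\<close>
definition meet_rate :: "real \<Rightarrow> real \<Rightarrow> real \<Rightarrow> real" where
  "meet_rate lam del a = (pi / 2) * (lam - del) * cos a + del"

text \<open>Expected delivery time of FM^0 (direct delivery at first meeting): conditional on
  the angle a the delivery time is exponential with mean 1/(k cos a + delta), and the
  angle is uniform on [0, pi/2] with density 2/pi.\<close>
definition ET_FM0 :: "real \<Rightarrow> real \<Rightarrow> real" where
  "ET_FM0 lam del = integral {0..pi/2} (\<lambda>a. (2 / pi) * (1 / meet_rate lam del a))"

end

theory Submission
  imports Defs
begin

text \<open>Since \<open>cos a = sin (\<pi>/2 - a) \<le> \<pi>/2 - a\<close>, the meeting rate is at most the affine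
  function \<open>k (\<pi>/2 - a) + \<delta>\<close>, whose reciprocal integrates to \<open>(1/k) ln ((k\<pi>/2 + \<delta>)/\<delta>)\<close>.
  With \<open>k = (\<pi>/2)(\<lambda> - \<delta>)\<close> this is at least a constant times \<open>ln (\<lambda>/\<delta>)\<close>, and
  \<open>ln (\<lambda>/\<delta>) \<ge> ln (1/\<delta>) / 2\<close> once \<open>\<delta> \<le> \<lambda>\<^sup>2\<close>.\<close>

lemma cos_le_pi_half_minus:
  fixes a :: real
  assumes "a \<le> pi / 2"
  shows "cos a \<le> pi / 2 - a"
proof -
  have "cos a = sin (pi / 2 - a)" by (simp add: sin_cos_eq)
  also have "\<dots> \<le> pi / 2 - a" by (rule sin_x_le_x) (use assms in simp)
  finally show ?thesis .
qed

lemma has_integral_inverse_affine_reflected: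
  fixes k d b :: real
  assumes "k > 0" and "d > 0" and "b \<ge> 0"
  shows "((\<lambda>a. 1 / (k * (b - a) + d)) has_integral ln ((k * b + d) / d) / k) {0..b}"
proof -
  define G where "G a = - ln (k * (b - a) + d) / k" for a
  have pos: "k * (b - a) + d > 0" if "a \<le> b" for a
    using that assms by (simp add: add_nonneg_pos)
  have "(G has_vector_derivative 1 / (k * (b - a) + d)) (at a within {0..b})"
    if "a \<in> {0..b}" for a
  proof -
    have "(G has_real_derivative 1 / (k * (b - a) + d)) (at a)"
      unfolding G_def using pos[of a] that assms(1) by (auto intro!: derivative_eq_intros)
    then show ?thesis
      by (simp add: has_real_derivative_iff_has_vector_derivative[symmetric]
          has_field_derivative_at_within)
  qed
  then have "((\<lambda>a. 1 / (k * (b - a) + d)) has_integral G b - G 0) {0..b}"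
    by (intro fundamental_theorem_of_calculus) (use assms in auto)
  moreover have "G b - G 0 = ln ((k * b + d) / d) / k"
    using pos[of 0] assms by (simp add: G_def ln_div diff_divide_distrib)
  ultimately show ?thesis by simp
qed

lemma meet_rate_pos:
  assumes "0 < d" and "d < lam" and "a \<in> {0..pi/2}"
  shows "meet_rate lam d a > 0"
  using assms cos_ge_zero[of a] unfolding meet_rate_def
  by (auto intro!: add_nonneg_pos)

lemma meet_rate_le_affine:
  assumes "d < lam" and "a \<le> pi / 2"
  shows "meet_rate lam d a \<le> (pi / 2) * (lam - d) * (pi / 2 - a) + d"
  using mult_left_mono[OF cos_le_pi_half_minus[OF assms(2)], of "(pi / 2) * (lam - d)"] assms(1)
  unfolding meet_rate_def by simp

lemma ET_FM0_ge_ln_ratio: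
  assumes "0 < d" and "d < lam"
  shows "ET_FM0 lam d \<ge> (4 / (pi\<^sup>2 * lam)) * ln (lam / d)"
proof -
  define k where "k = (pi / 2) * (lam - d)"
  have k: "k > 0" using assms by (simp add: k_def)
  have affine: "((\<lambda>a. (2 / pi) * (1 / (k * (pi/2 - a) + d)))
      has_integral 2 / (pi * k) * ln ((k * (pi/2) + d) / d)) {0..pi/2}"
    using has_integral_mult_right[OF has_integral_inverse_affine_reflected, of k d "pi/2" "2/pi"]
      k assms by simp
  have "(\<lambda>a. (2 / pi) * (1 / meet_rate lam d a)) integrable_on {0..pi/2}"
    unfolding meet_rate_def
    by (rule integrable_continuous_interval, intro continuous_intros)
      (use meet_rate_pos[OF assms] in \<open>force simp: meet_rate_def\<close>)
  moreover have "(2 / pi) * (1 / (k * (pi/2 - a) + d)) \<le> (2 / pi) * (1 / meet_rate lam d a)"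
    if "a \<in> {0..pi/2}" for a
    using meet_rate_le_affine[OF assms(2), of a] meet_rate_pos[OF assms that] that
    by (intro mult_left_mono frac_le) (auto simp: k_def)
  ultimately have integral_bound: "2 / (pi * k) * ln ((k * (pi/2) + d) / d) \<le> ET_FM0 lam d"
    unfolding ET_FM0_def by (intro has_integral_le[OF affine integrable_integral]) auto
  have coefficient: "4 / (pi\<^sup>2 * lam) \<le> 2 / (pi * k)"
  proof -
    have "pi * k \<le> pi * (pi / 2 * lam)" using assms by (simp add: k_def)
    then have "2 / (pi * (pi / 2 * lam)) \<le> 2 / (pi * k)"
      using k by (intro divide_left_mono) auto
    then show ?thesis by (simp add: power2_eq_square)
  qed
  have argument: "ln (lam / d) \<le> ln ((k * (pi/2) + d) / d)"
  proof -
    have "1 \<le> pi / 2 * (pi / 2)" using pi_gt3 mult_mono[of 1 "pi / 2" 1 "pi / 2"] by simp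
    then have "(lam - d) * 1 \<le> (lam - d) * (pi / 2 * (pi / 2))"
      using assms by (intro mult_left_mono) auto
    then have "lam \<le> k * (pi/2) + d" by (simp add: k_def mult_ac)
    then show ?thesis using assms by (intro ln_mono divide_right_mono) auto
  qed
  have "4 / (pi\<^sup>2 * lam) * ln (lam / d) \<le> 2 / (pi * k) * ln ((k * (pi/2) + d) / d)"
    using coefficient argument k assms by (intro mult_mono) auto
  with integral_bound show ?thesis by linarith
qed

lemma ln_inverse_le_twice_ln_ratio:
  fixes d lam :: real
  assumes "0 < d" and "0 < lam" and "d \<le> lam\<^sup>2"
  shows "ln (1 / d) \<le> 2 * ln (lam / d)"
proof -
  have "ln d \<le> ln (lam\<^sup>2)" using assms by simp
  then have "ln d \<le> 2 * ln lam" using assms by (simp add: ln_realpow)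
  then show ?thesis using assms by (simp add: ln_div)
qed

theorem lemma8:
  fixes lam :: real and del :: "nat \<Rightarrow> real"
  assumes "lam > 0"
    and "\<And>n. del n > 0"
    and "del \<longlonglongrightarrow> 0"
  shows "\<exists>c>0. \<forall>\<^sub>F n in sequentially. ET_FM0 lam (del n) \<ge> c * ln (1 / del n)"
proof (intro exI conjI)
  show "2 / (pi\<^sup>2 * lam) > 0" using assms(1) by simp
  have "0 < min lam (lam\<^sup>2)" using assms(1) by simp
  then have "\<forall>\<^sub>F n in sequentially. del n < min lam (lam\<^sup>2)"
    using order_tendstoD(2)[OF assms(3)] by blast
  then show "\<forall>\<^sub>F n in sequentially. ET_FM0 lam (del n) \<ge> 2 / (pi\<^sup>2 * lam) * ln (1 / del n)"
  proof eventually_elim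
    case (elim n)
    have "ln (1 / del n) \<le> 2 * ln (lam / del n)"
      using ln_inverse_le_twice_ln_ratio[OF assms(2,1), of n] elim by simp
    then have "2 / (pi\<^sup>2 * lam) * ln (1 / del n) \<le> (4 / (pi\<^sup>2 * lam)) * ln (lam / del n)"
      using assms(1) mult_left_mono[of _ _ "2 / (pi\<^sup>2 * lam)"] by fastforce
    also have "\<dots> \<le> ET_FM0 lam (del n)"
      using ET_FM0_ge_ln_ratio[OF assms(2)] elim by simp
    finally show ?case .
  qed
qed

end
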